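(* Let $G$ be a finite group acting $2$-by-block-transitively on a set $\Omega$, and let $(\omega,\omega')$ be a pair of points in different blocks. Then \[|G(\omega,\omega')| = \frac{|G(\omega)|^2}{|G|-|G([\omega])|};\] in particular the right-hand side is an integer.
   Context: $\Omega$ carries an equivalence relation whose classes are blocks; $[\omega]$ is the block of $\omega$, $G([\omega])$ its setwise stabilizer, $G(\omega)$ the point stabilizer, $G(\omega,\omega')=G(\omega)\cap G(\omega')$. The action is $2$-by-block-transitive if the relation is $G$-invariant, there are at least two blocks, and $G$ is transitive on ordered pairs of points in different blocks. *)

theory Defs
  imports Complex_Main "HOL-Algebra.Group_Action"
begin

definition block :: "('b \<times> 'b) set \<Rightarrow> 'b \<Rightarrow> 'b set" where
  "block R x = R `` {x}"

definition setwise_stabilizer :: "('a, 'c) monoid_scheme \<Rightarrow> ('a \<Rightarrow> 'b \<Rightarrow> 'b) \<Rightarrow> 'b set \<Rightarrow> 'a set" where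
  "setwise_stabilizer G \<phi> B = {g \<in> carrier G. \<phi> g ` B = B}"

definition two_by_block_transitive ::
  "('a, 'c) monoid_scheme \<Rightarrow> 'b set \<Rightarrow> ('a \<Rightarrow> 'b \<Rightarrow> 'b) \<Rightarrow> ('b \<times> 'b) set \<Rightarrow> bool" where
  "two_by_block_transitive G E \<phi> R \<longleftrightarrow>
     group_action G E \<phi> \<and>
     equiv E R \<and>
     (\<forall>g \<in> carrier G. \<forall>x y. (x, y) \<in> R \<longrightarrow> (\<phi> g x, \<phi> g y) \<in> R) \<and>
     2 \<le> card (E // R) \<and>
     (\<forall>x \<in> E. \<forall>y \<in> E. \<forall>x' \<in> E. \<forall>y' \<in> E.
        (x, y) \<notin> R \<longrightarrow> (x', y') \<notin> R \<longrightarrow>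
        (\<exists>g \<in> carrier G. \<phi> g x = x' \<and> \<phi> g y = y'))"

end

theory Submission
  imports Defs
begin

(* Orbit-stabilizer, applied to three transitive actions.  G is transitive on Omega, so
   |G| = |Omega| |G(w)|.  The setwise stabilizer G([w]) contains G(w) and is transitive on [w],
   so |G([w])| = |[w]| |G(w)|.  By 2-by-block-transitivity G(w) is transitive on Omega - [w]
   with point stabilizer G(w,w'), so |G(w)| = |Omega - [w]| |G(w,w')|.  Hence
   |G| - |G([w])| = |G(w)| |Omega - [w]| = |G(w)|^2 / |G(w,w')|. *)

lemma (in group_action) setwise_stabilizer_subgroup:
  assumes "S \<subseteq> E"
  shows "subgroup (setwise_stabilizer G \<phi> S) G"
proof -
  interpret group G
    using group_hom group_hom.axioms(1) by blast
  have image_mult: "\<phi> (a \<otimes> b) ` S = \<phi> a ` \<phi> b ` S"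
    if "a \<in> carrier G" "b \<in> carrier G" for a b
    unfolding image_image using that assms
    by (intro image_cong) (auto simp: composition_rule subset_iff)
  show ?thesis
  proof (rule subgroupI)
    have "\<phi> \<one> ` S = (\<lambda>s. s) ` S"
      unfolding id_eq_one[symmetric] using assms by (intro image_cong) (auto simp: subset_iff)
    then show "setwise_stabilizer G \<phi> S \<noteq> {}"
      by (auto simp: setwise_stabilizer_def)
  next
    fix a assume "a \<in> setwise_stabilizer G \<phi> S"
    then have a: "a \<in> carrier G" "\<phi> a ` S = S"
      by (simp_all add: setwise_stabilizer_def)
    have "\<phi> (inv a) ` S = \<phi> (inv a) ` \<phi> a ` S"
      using a by simp
    also have "\<dots> = (\<lambda>s. s) ` S"
      unfolding image_image using a assms
      by (intro image_cong) (auto simp: orbit_sym_aux subset_iff)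
    also have "\<dots> = S"
      by simp
    finally show "inv a \<in> setwise_stabilizer G \<phi> S"
      using a by (simp add: setwise_stabilizer_def)
  next
    fix a b assume "a \<in> setwise_stabilizer G \<phi> S" "b \<in> setwise_stabilizer G \<phi> S"
    then show "a \<otimes> b \<in> setwise_stabilizer G \<phi> S"
      using image_mult by (simp add: setwise_stabilizer_def)
  qed (auto simp: setwise_stabilizer_def)
qed

lemma (in transitive_action) orbit_eq:
  assumes "x \<in> E"
  shows "orbit G \<phi> x = E"
  using assms unique_orbit element_image by (auto simp: orbit_def)

lemma (in transitive_action) order_eq_card_mult_card_stabilizer:
  assumes "x \<in> E"
  shows "order G = card E * card (stabilizer G \<phi> x)"
  using orbit_stabilizer_theorem[OF assms] orbit_eq[OF assms] by simp

lemma (in group_action) subgroup_orbit_stabilizer: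
  assumes "subgroup K G" and "x \<in> E"
  shows "card ((\<lambda>g. \<phi> g x) ` K) * card (K \<inter> stabilizer G \<phi> x) = card K"
proof -
  interpret K: group_action "G\<lparr>carrier := K\<rparr>" E \<phi>
    using induced_action[OF assms(1)] .
  have "orbit (G\<lparr>carrier := K\<rparr>) \<phi> x = (\<lambda>g. \<phi> g x) ` K"
    by (auto simp: orbit_def)
  moreover have "stabilizer (G\<lparr>carrier := K\<rparr>) \<phi> x = K \<inter> stabilizer G \<phi> x"
    using subgroup.subset[OF assms(1)] by (auto simp: stabilizer_def)
  ultimately show ?thesis
    using K.orbit_stabilizer_theorem[OF assms(2)] by (simp add: order_def)
qed

locale block_system = group_action G E \<phi> for G (structure) and E and \<phi> +
  fixes R
  assumes equiv_R: "equiv E R"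
    and R_invariant: "\<lbrakk>g \<in> carrier G; (x, y) \<in> R\<rbrakk> \<Longrightarrow> (\<phi> g x, \<phi> g y) \<in> R"
begin

lemma block_subset: "block R x \<subseteq> E"
  using equiv_R by (auto simp: block_def equiv_def refl_on_def)

lemma R_invariant_iff:
  assumes "g \<in> carrier G" "x \<in> E" "y \<in> E"
  shows "(\<phi> g x, \<phi> g y) \<in> R \<longleftrightarrow> (x, y) \<in> R"
proof
  interpret group G
    using group_hom group_hom.axioms(1) by blast
  assume "(\<phi> g x, \<phi> g y) \<in> R"
  then have "(\<phi> (inv g) (\<phi> g x), \<phi> (inv g) (\<phi> g y)) \<in> R"
    using assms(1) R_invariant by blast
  then show "(x, y) \<in> R"
    using assms orbit_sym_aux by simp
qed (use assms R_invariant in blast)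

lemma block_image:
  assumes g: "g \<in> carrier G" and x: "x \<in> E"
  shows "\<phi> g ` block R x = block R (\<phi> g x)"
proof
  show "\<phi> g ` block R x \<subseteq> block R (\<phi> g x)"
    by (auto simp: block_def intro: R_invariant[OF g])
next
  interpret group G
    using group_hom group_hom.axioms(1) by blast
  show "block R (\<phi> g x) \<subseteq> \<phi> g ` block R x"
  proof
    fix y assume y: "y \<in> block R (\<phi> g x)"
    then have "y \<in> E"
      using block_subset by blast
    define z where "z = \<phi> (inv g) y"
    have z: "z \<in> E" "\<phi> g z = y"
      using g \<open>y \<in> E\<close> element_image[of "inv g" y z] orbit_sym_aux[of "inv g" y z]
      by (simp_all add: z_def)
    then have "(x, z) \<in> R"
      using y g x R_invariant_iff[of g x z] by (simp add: block_def)
    with z show "y \<in> \<phi> g ` block R x"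
      by (auto simp: block_def)
  qed
qed

lemma setwise_stabilizer_block_iff:
  assumes "g \<in> carrier G" and "x \<in> E"
  shows "g \<in> setwise_stabilizer G \<phi> (block R x) \<longleftrightarrow> (x, \<phi> g x) \<in> R"
proof -
  have "g \<in> setwise_stabilizer G \<phi> (block R x) \<longleftrightarrow> block R x = block R (\<phi> g x)"
    using assms by (auto simp: setwise_stabilizer_def block_image)
  also have "\<dots> \<longleftrightarrow> (x, \<phi> g x) \<in> R"
    using equiv_class_eq_iff[OF equiv_R, of x "\<phi> g x"] assms element_image
    by (auto simp: block_def)
  finally show ?thesis .
qed

lemma image_setwise_stabilizer_block:
  assumes "x \<in> E"
  shows "(\<lambda>g. \<phi> g x) ` setwise_stabilizer G \<phi> (block R x) = block R x \<inter> orbit G \<phi> x"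
  using assms setwise_stabilizer_block_iff
  by (auto simp: orbit_def block_def setwise_stabilizer_def)

lemma card_setwise_stabilizer_block:
  assumes "x \<in> E"
  shows "card (setwise_stabilizer G \<phi> (block R x)) =
           card (block R x \<inter> orbit G \<phi> x) * card (stabilizer G \<phi> x)"
proof -
  have "stabilizer G \<phi> x \<subseteq> setwise_stabilizer G \<phi> (block R x)"
    using assms setwise_stabilizer_block_iff equiv_class_self[OF equiv_R]
    by (auto simp: stabilizer_def block_def)
  then show ?thesis
    using subgroup_orbit_stabilizer[OF setwise_stabilizer_subgroup[OF block_subset[of x]] assms]
      image_setwise_stabilizer_block[OF assms]
    by (simp add: Int_absorb1)
qed

end

locale two_by_block_transitive_action =
  fixes G (structure) and E and \<phi> and R
  assumes two_by_block_transitive: "two_by_block_transitive G E \<phi> R"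
begin

sublocale block_system G E \<phi> R
  using two_by_block_transitive
  by (simp add: two_by_block_transitive_def block_system_def block_system_axioms_def)

lemma pair_transitive:
  assumes "x \<in> E" "y \<in> E" "x' \<in> E" "y' \<in> E" "(x, y) \<notin> R" "(x', y') \<notin> R"
  shows "\<exists>g \<in> carrier G. \<phi> g x = x' \<and> \<phi> g y = y'"
  using two_by_block_transitive assms unfolding two_by_block_transitive_def by blast

lemma exists_unrelated:
  assumes "x \<in> E"
  obtains y where "y \<in> E" "(x, y) \<notin> R"
proof -
  have "E // R \<noteq> {block R x}"
    using two_by_block_transitive by (auto simp: two_by_block_transitive_def)
  then obtain z where "z \<in> E" "block R z \<noteq> block R x"
    using assms by (auto simp: quotient_def block_def)
  then show ?thesis
    using that equiv_class_eq[OF equiv_R] assms by (metis block_def)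
qed

sublocale transitive_action G E \<phi>
proof
  fix x y assume "x \<in> E" "y \<in> E"
  obtain x' where "x' \<in> E" "(x, x') \<notin> R"
    using exists_unrelated[OF \<open>x \<in> E\<close>] .
  moreover obtain y' where "y' \<in> E" "(y, y') \<notin> R"
    using exists_unrelated[OF \<open>y \<in> E\<close>] .
  ultimately show "\<exists>g \<in> carrier G. \<phi> g x = y"
    using pair_transitive \<open>x \<in> E\<close> \<open>y \<in> E\<close> by meson
qed

lemma image_stabilizer_unrelated:
  assumes "x \<in> E" "y \<in> E" "(x, y) \<notin> R"
  shows "(\<lambda>g. \<phi> g y) ` stabilizer G \<phi> x = E - block R x"
proof
  show "(\<lambda>g. \<phi> g y) ` stabilizer G \<phi> x \<subseteq> E - block R x"
    using assms R_invariant_iff element_image by (fastforce simp: stabilizer_def block_def)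
next
  show "E - block R x \<subseteq> (\<lambda>g. \<phi> g y) ` stabilizer G \<phi> x"
  proof
    fix z assume "z \<in> E - block R x"
    then obtain g where "g \<in> carrier G" "\<phi> g x = x" "\<phi> g y = z"
      using pair_transitive[of x y x z] assms by (auto simp: block_def)
    then show "z \<in> (\<lambda>g. \<phi> g y) ` stabilizer G \<phi> x"
      by (auto simp: stabilizer_def)
  qed
qed

lemma card_stabilizer_eq:
  assumes "x \<in> E" "y \<in> E" "(x, y) \<notin> R"
  shows "card (stabilizer G \<phi> x) =
           card (E - block R x) * card (stabilizer G \<phi> x \<inter> stabilizer G \<phi> y)"
  using subgroup_orbit_stabilizer[OF stabilizer_subgroup[OF assms(1)] assms(2)]
    image_stabilizer_unrelated[OF assms]
  by simp

end

theorem corollary2p2: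
  fixes G (structure) and E :: "'b set" and \<phi> :: "'a \<Rightarrow> 'b \<Rightarrow> 'b" and R :: "('b \<times> 'b) set"
  assumes "group G" and "finite (carrier G)"
    and "two_by_block_transitive G E \<phi> R"
    and "w \<in> E" and "w' \<in> E" and "(w, w') \<notin> R"
  shows "real (card (stabilizer G \<phi> w \<inter> stabilizer G \<phi> w')) =
           real (card (stabilizer G \<phi> w)) ^ 2 /
           (real (order G) - real (card (setwise_stabilizer G \<phi> (block R w)))) \<and>
         (\<exists>n :: int. of_int n = real (card (stabilizer G \<phi> w)) ^ 2 /
           (real (order G) - real (card (setwise_stabilizer G \<phi> (block R w)))))"
proof -
  interpret two_by_block_transitive_action G E \<phi> R
    using assms(3) by (rule two_by_block_transitive_action.intro)
  define s where "s = card (stabilizer G \<phi> w)"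
  define h where "h = card (stabilizer G \<phi> w \<inter> stabilizer G \<phi> w')"
  define d where "d = card (E - block R w)"
  have "finite E"
    using orbit_eq[OF assms(4)] finite_imageI[OF assms(2), of "\<lambda>g. \<phi> g w"]
    by (simp add: orbit_def setcompr_eq_image)
  have "d > 0"
    using \<open>finite E\<close> assms(5,6) by (auto simp: d_def card_gt_0_iff block_def)
  have "finite (stabilizer G \<phi> w)"
    using finite_subset[OF stabilizer_subset assms(2)] .
  then have "s > 0"
    using stabilizer_one_closed[OF assms(4)] by (auto simp: s_def card_gt_0_iff)
  have "card E = d + card (block R w)"
    using \<open>finite E\<close> block_subset[of w]
    by (simp add: d_def card_Diff_subset card_mono finite_subset)
  moreover have "card (setwise_stabilizer G \<phi> (block R w)) = card (block R w) * s"
    using card_setwise_stabilizer_block[OF assms(4)] orbit_eq[OF assms(4)] block_subset[of w]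
    by (simp add: s_def Int_absorb2)
  ultimately have denominator:
    "real (order G) - real (card (setwise_stabilizer G \<phi> (block R w))) = real s * real d"
    using order_eq_card_mult_card_stabilizer[OF assms(4)] by (simp add: s_def algebra_simps)
  have "s = d * h"
    using card_stabilizer_eq[OF assms(4-6)] by (simp add: s_def h_def d_def)
  then have "real h = real s ^ 2 /
               (real (order G) - real (card (setwise_stabilizer G \<phi> (block R w))))"
    unfolding denominator using \<open>d > 0\<close> \<open>s > 0\<close> by (simp add: power2_eq_square)
  then show ?thesis
    unfolding s_def h_def by (metis of_int_of_nat_eq)
qed

end
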